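(* Let $p\ge1$ and suppose $\mathbb{E}[\|Z\|^{2p}]<\infty$. Then (i) $\mathbb{E}[A_n^p]=O(n^{3p/2})$ as $n\to\infty$; (ii) if moreover $\mu=0$, then $\mathbb{E}[A_n^p]=O(n^p)$.
   Context: $Z$ is a random vector in $\mathbb{R}^2$ with $\mathbb{E}[\|Z\|^2]<\infty$; $Z_1,Z_2,\ldots$ are i.i.d. copies of $Z$; $S_0=0$, $S_n=\sum_{k=1}^n Z_k$; $\mu=\mathbb{E}Z$. $A_n$ is the area of the convex hull of $\{S_0,\ldots,S_n\}$. *)

theory Defs
  imports "HOL-Probability.Probability" "HOL-Library.Landau_Symbols"
begin

text \<open>Random walk S_n = Z_1 + ... + Z_n, with the i.i.d. steps indexed from 0:
  S n = Z 0 + ... + Z (n-1).\<close>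
definition walk :: "(nat \<Rightarrow> 'a \<Rightarrow> real^2) \<Rightarrow> nat \<Rightarrow> 'a \<Rightarrow> real^2" where
  "walk Z n \<omega> = (\<Sum>k<n. Z k \<omega>)"

definition hull_area :: "(nat \<Rightarrow> 'a \<Rightarrow> real^2) \<Rightarrow> nat \<Rightarrow> 'a \<Rightarrow> real" where
  "hull_area Z n \<omega> = measure lborel (convex hull {walk Z k \<omega> | k. k \<le> n})"

end

theory Submission
  imports Defs
begin

text \<open>Let \<open>u\<close> be a unit vector parallel to the mean \<open>\<mu>\<close> and \<open>u' = rot90 u\<close>. Every \<open>S_k\<close>
  with \<open>k \<le> n\<close> lies in the rectangle \<open>\<bar>x \<bullet> u\<bar> \<le> \<alpha>_n + n \<parallel>\<mu>\<parallel>\<close>, \<open>\<bar>x \<bullet> u'\<bar> \<le> \<beta>_n\<close>, where \<open>\<alpha>_n\<close>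
  and \<open>\<beta>_n\<close> are the running maxima over \<open>k \<le> n\<close> of the centred scalar walks
  \<open>\<bar>\<Sum>j<k. (Z_j - \<mu>) \<bullet> u\<bar>\<close> and \<open>\<bar>\<Sum>j<k. (Z_j - \<mu>) \<bullet> u'\<bar>\<close>; hence \<open>A_n \<le> 4 (\<alpha>_n + n \<parallel>\<mu>\<parallel>) \<beta>_n\<close>.
  For a centred scalar walk with bounded \<open>q\<close>-th moments, \<open>q = 2p \<ge> 2\<close>, a second-order Taylor
  estimate for \<open>\<bar>x\<bar>^q\<close> gives the Marcinkiewicz-Zygmund bound \<open>E \<bar>S_n\<bar>^q = O(n^(q/2))\<close>, and a
  pathwise form of Doob's \<open>L^q\<close> inequality carries it over to the running maximum. Young's
  inequality then splits the product: \<open>E A_n^p = O(n^p + \<parallel>\<mu>\<parallel>^p n^(3p/2))\<close>.\<close>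

lemma powr_mult_powr_le_convex_comb:
  fixes a b \<theta> :: real
  assumes "a \<ge> 0" "b \<ge> 0" "0 \<le> \<theta>" "\<theta> \<le> 1"
  shows "a powr \<theta> * b powr (1-\<theta>) \<le> \<theta>*a + (1-\<theta>)*b"
proof (cases "a = 0 \<or> b = 0")
  case True then show ?thesis using assms by auto
next
  case False then show ?thesis using Youngs_inequality_0[of \<theta> "1-\<theta>" a b] assms by auto
qed

lemma powr_diff_one_mult:
  fixes b q :: real
  assumes "b \<ge> 0"
  shows "b powr q = b powr (q-1) * b"
proof (cases "b = 0")
  case False
  then show ?thesis using assms powr_add[of b "q-1" 1] by simp
qed simp

lemma powr_ge_tangent:
  fixes a b q :: real
  assumes "q \<ge> 1" "b > 0"
  shows "\<bar>a\<bar> powr q \<ge> b powr q + q * b powr (q-1) * (a - b)"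
proof (cases "a \<le> 0")
  case True
  have "b powr q + q * b powr (q-1) * (a - b) = (1-q) * b powr q + q * b powr (q-1) * a"
    using powr_diff_one_mult[of b q] assms by (simp add: algebra_simps)
  also have "\<dots> \<le> 0" using True assms
    by (intro add_nonpos_nonpos) (auto simp: mult_nonneg_nonpos mult_nonpos_nonneg)
  finally show ?thesis by (smt (verit) powr_ge_zero)
next
  case False
  have young: "(a powr q) powr (1/q) * (b powr q) powr (1 - 1/q)
      \<le> (1/q)*(a powr q) + (1-1/q)*(b powr q)"
    using assms by (intro powr_mult_powr_le_convex_comb) auto
  have "(a powr q) powr (1/q) = a" using False assms by (simp add: powr_powr)
  moreover have "(b powr q) powr (1 - 1/q) = b powr (q-1)" using assms
    by (simp add: powr_powr algebra_simps)
  ultimately have "a * b powr (q-1) \<le> (1/q)*(a powr q) + (1-1/q)*(b powr q)" using young by simp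
  then have "q * (a * b powr (q-1)) \<le> a powr q + (q-1)*(b powr q)" using assms
    by (simp add: field_simps)
  then show ?thesis using powr_diff_one_mult[of b q] assms False by (simp add: algebra_simps)
qed

text \<open>\<open>q * signed_powr q\<close> is the derivative of \<open>\<lambda>x. \<bar>x\<bar> powr q\<close>.\<close>

definition signed_powr :: "real \<Rightarrow> real \<Rightarrow> real" where
  "signed_powr q b = sgn b * \<bar>b\<bar> powr (q-1)"

lemma signed_powr_minus: "signed_powr q (-b) = - signed_powr q b"
  by (simp add: signed_powr_def)

lemma abs_signed_powr: "\<bar>signed_powr q b\<bar> = \<bar>b\<bar> powr (q-1)"
  by (cases "b = 0") (auto simp: signed_powr_def abs_mult)

lemma borel_measurable_signed_powr [measurable]: "signed_powr q \<in> borel_measurable borel"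
  unfolding signed_powr_def by measurable

lemma abs_powr_ge_tangent:
  fixes a b q :: real
  assumes "q \<ge> 1"
  shows "\<bar>a\<bar> powr q \<ge> \<bar>b\<bar> powr q + q * signed_powr q b * (a - b)"
proof -
  consider "b > 0" | "b = 0" | "b < 0" by linarith
  then show ?thesis
  proof cases
    case 1 then show ?thesis using powr_ge_tangent[OF assms 1, of a] by (simp add: signed_powr_def)
  next
    case 2 then show ?thesis by (simp add: signed_powr_def)
  next
    case 3
    have "\<bar>-a\<bar> powr q \<ge> (-b) powr q + q * (-b) powr (q-1) * (-a - -b)"
      using powr_ge_tangent[OF assms, of "-b" "-a"] 3 by simp
    then show ?thesis using 3 by (simp add: signed_powr_def algebra_simps)
  qed
qed

lemma powr_superadditive:
  fixes a b r :: real
  assumes "a \<ge> 0" "b \<ge> 0" "r \<ge> 1"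
  shows "a powr r + b powr r \<le> (a + b) powr r"
proof -
  have "a powr r \<le> a * (a+b) powr (r-1)"
    using powr_diff_one_mult[of a r] assms by (simp add: mult.commute mult_left_mono powr_mono2)
  moreover have "b powr r \<le> b * (a+b) powr (r-1)"
    using powr_diff_one_mult[of b r] assms by (simp add: mult.commute mult_left_mono powr_mono2)
  ultimately have "a powr r + b powr r \<le> (a+b) * (a+b) powr (r-1)" by (simp add: algebra_simps)
  also have "\<dots> = (a+b) powr r" using powr_diff_one_mult[of "a+b" r] assms by simp
  finally show ?thesis .
qed

lemma add_powr_le_two_powr:
  fixes a b q :: real
  assumes "a \<ge> 0" "b \<ge> 0" "q \<ge> 0"
  shows "(a + b) powr q \<le> 2 powr q * (a powr q + b powr q)"
proof -
  have "(a + b) powr q \<le> (2 * max a b) powr q" using assms by (intro powr_mono2) auto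
  also have "\<dots> = 2 powr q * (max a b) powr q" using assms by (simp add: powr_mult)
  also have "(max a b) powr q \<le> a powr q + b powr q" by (simp add: max_def)
  then have "2 powr q * (max a b) powr q \<le> 2 powr q * (a powr q + b powr q)"
    by (intro mult_left_mono) auto
  finally show ?thesis .
qed

lemma powr_le_one_plus_powr:
  fixes a q r :: real
  assumes "0 \<le> r" "r \<le> q" "a \<ge> 0"
  shows "a powr r \<le> 1 + a powr q"
proof (cases "a \<le> 1")
  case True
  then have "a powr r \<le> 1" using assms by (cases "a = 0") (auto intro: powr_le1)
  then show ?thesis by (smt (verit) powr_ge_zero)
next
  case False
  then have "a powr r \<le> a powr q" using assms by (intro powr_mono) auto
  then show ?thesis by simp
qed

lemma inner_diff_powr_le:
  fixes z \<mu> v :: "'a::real_inner"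
  assumes "q \<ge> 0"
  shows "\<bar>(z - \<mu>) \<bullet> v\<bar> powr q \<le> (2 * norm v) powr q * (norm z powr q + norm \<mu> powr q)"
proof -
  have "\<bar>(z - \<mu>) \<bullet> v\<bar> \<le> norm v * (norm z + norm \<mu>)"
    using Cauchy_Schwarz_ineq2[of "z - \<mu>" v] norm_triangle_ineq4[of z \<mu>]
    by (simp add: mult.commute mult_left_mono order_trans)
  then have "\<bar>(z - \<mu>) \<bullet> v\<bar> powr q \<le> (norm v * (norm z + norm \<mu>)) powr q"
    using assms by (intro powr_mono2) auto
  also have "\<dots> \<le> norm v powr q * (2 powr q * (norm z powr q + norm \<mu> powr q))"
    using assms add_powr_le_two_powr[of "norm z" "norm \<mu>" q]
    by (simp add: powr_mult mult_left_mono)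
  finally show ?thesis by (simp add: powr_mult ac_simps)
qed

lemma signed_powr_lipschitz_same_sign:
  fixes q u x :: real
  assumes "q \<ge> 2" "0 \<le> x" "x \<le> u"
  shows "\<bar>signed_powr q u - signed_powr q x\<bar> \<le> (q-1) * (\<bar>u\<bar>+\<bar>x\<bar>) powr (q-2) * \<bar>u - x\<bar>"
proof (cases "u = 0")
  case True then show ?thesis using assms by (simp add: signed_powr_def)
next
  case False
  then have u: "u > 0" using assms by auto
  have tangent: "\<bar>x\<bar> powr (q-1) \<ge> u powr (q-1) + (q-1) * u powr (q-1-1) * (x - u)"
    using powr_ge_tangent[of "q-1" u x] assms u by simp
  have mono: "x powr (q-1) \<le> u powr (q-1)" using assms by (intro powr_mono2) auto
  have "signed_powr q u - signed_powr q x = u powr (q-1) - x powr (q-1)"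
    using assms u by (cases "x = 0") (auto simp: signed_powr_def)
  then have "\<bar>signed_powr q u - signed_powr q x\<bar> = u powr (q-1) - x powr (q-1)" using mono by simp
  also have "\<dots> \<le> (q-1) * u powr (q-2) * (u - x)" using tangent assms by (simp add: algebra_simps)
  also have "\<dots> \<le> (q-1) * (\<bar>u\<bar>+\<bar>x\<bar>) powr (q-2) * \<bar>u - x\<bar>"
  proof -
    have "u powr (q-2) \<le> (\<bar>u\<bar>+\<bar>x\<bar>) powr (q-2)" using assms by (intro powr_mono2) auto
    then show ?thesis using assms by (auto intro!: mult_right_mono mult_left_mono)
  qed
  finally show ?thesis .
qed

lemma signed_powr_lipschitz_opposite_sign:
  fixes q u x :: real
  assumes "q \<ge> 2" "x \<le> 0" "0 \<le> u"
  shows "\<bar>signed_powr q u - signed_powr q x\<bar> \<le> (q-1) * (\<bar>u\<bar>+\<bar>x\<bar>) powr (q-2) * \<bar>u - x\<bar>"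
proof -
  have diff: "signed_powr q u - signed_powr q x = u powr (q-1) + \<bar>x\<bar> powr (q-1)"
    using assms by (cases "x = 0"; cases "u = 0") (auto simp: signed_powr_def)
  have "u powr (q-1) + \<bar>x\<bar> powr (q-1) \<le> (u + \<bar>x\<bar>) powr (q-1)"
    using assms by (intro powr_superadditive) auto
  also have "\<dots> = (u + \<bar>x\<bar>) powr (q-1-1) * (u + \<bar>x\<bar>)"
    using powr_diff_one_mult[of "u+\<bar>x\<bar>" "q-1"] assms by simp
  also have "\<dots> \<le> (q-1) * (\<bar>u\<bar>+\<bar>x\<bar>) powr (q-2) * \<bar>u - x\<bar>"
  proof -
    have "(u + \<bar>x\<bar>) powr (q-1-1) * (u + \<bar>x\<bar>) \<le> (q-1) * ((u + \<bar>x\<bar>) powr (q-1-1) * (u + \<bar>x\<bar>))"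
      using mult_right_mono[of 1 "q-1" "(u + \<bar>x\<bar>) powr (q-1-1) * (u + \<bar>x\<bar>)"] assms by simp
    then show ?thesis using assms by (simp add: algebra_simps)
  qed
  finally show ?thesis using diff by (smt (verit) powr_ge_zero)
qed

lemma signed_powr_lipschitz:
  fixes q u x :: real
  assumes "q \<ge> 2"
  shows "\<bar>signed_powr q u - signed_powr q x\<bar> \<le> (q-1) * (\<bar>u\<bar>+\<bar>x\<bar>) powr (q-2) * \<bar>u - x\<bar>"
proof -
  have swap: "\<bar>signed_powr q u - signed_powr q x\<bar> = \<bar>signed_powr q x - signed_powr q u\<bar>"
    "\<bar>u - x\<bar> = \<bar>x - u\<bar>" "\<bar>u\<bar>+\<bar>x\<bar> = \<bar>x\<bar>+\<bar>u\<bar>"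
    by auto
  have neg: "\<bar>signed_powr q u - signed_powr q x\<bar> = \<bar>signed_powr q (-u) - signed_powr q (-x)\<bar>"
    "\<bar>u - x\<bar> = \<bar>(-u) - (-x)\<bar>"
    by (auto simp: signed_powr_minus)
  consider "0 \<le> x" "x \<le> u" | "0 \<le> u" "u \<le> x" | "x \<le> 0" "u \<le> x" | "u \<le> 0" "x \<le> u"
    | "x \<le> 0" "0 \<le> u" | "u \<le> 0" "0 \<le> x" by linarith
  then show ?thesis
  proof cases
    case 1 then show ?thesis using signed_powr_lipschitz_same_sign assms by blast
  next
    case 2 then show ?thesis
      using signed_powr_lipschitz_same_sign[of q u x] assms swap by (simp add: add.commute)
  next
    case 3 then show ?thesis
      using signed_powr_lipschitz_same_sign[of q "-x" "-u"] assms swap neg by (simp add: add.commute)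
  next
    case 4 then show ?thesis
      using signed_powr_lipschitz_same_sign[of q "-u" "-x"] assms neg by (simp add: add.commute)
  next
    case 5 then show ?thesis using signed_powr_lipschitz_opposite_sign assms by blast
  next
    case 6 then show ?thesis
      using signed_powr_lipschitz_opposite_sign[of q u x] assms swap by (simp add: add.commute)
  qed
qed

lemma abs_powr_add_le_second_order:
  fixes q w x :: real
  assumes "q \<ge> 2"
  shows "\<bar>w+x\<bar> powr q \<le> \<bar>w\<bar> powr q + q * signed_powr q w * x
    + q*(q-1) * (2*\<bar>w\<bar>+\<bar>x\<bar>) powr (q-2) * x\<^sup>2"
proof -
  have tangent: "\<bar>w+x\<bar> powr q \<le> \<bar>w\<bar> powr q + q * signed_powr q (w+x) * x"
    using abs_powr_ge_tangent[where a=w and b="w+x" and q=q] assms by (simp add: algebra_simps)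
  have lip: "\<bar>signed_powr q (w+x) - signed_powr q w\<bar> \<le> (q-1) * (\<bar>w+x\<bar>+\<bar>w\<bar>) powr (q-2) * \<bar>x\<bar>"
    using signed_powr_lipschitz[OF assms, of "w+x" w] by simp
  have "q * signed_powr q (w+x) * x - q * signed_powr q w * x
      \<le> q * \<bar>signed_powr q (w+x) - signed_powr q w\<bar> * \<bar>x\<bar>"
  proof -
    have "q * (signed_powr q (w+x) - signed_powr q w) * x
        \<le> \<bar>q * (signed_powr q (w+x) - signed_powr q w) * x\<bar>" by simp
    also have "\<dots> = q * \<bar>signed_powr q (w+x) - signed_powr q w\<bar> * \<bar>x\<bar>"
      using assms by (simp add: abs_mult)
    finally show ?thesis by (simp add: algebra_simps)
  qed
  also have "\<dots> \<le> q * ((q-1) * (\<bar>w+x\<bar>+\<bar>w\<bar>) powr (q-2) * \<bar>x\<bar>) * \<bar>x\<bar>"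
    using assms lip by (intro mult_right_mono mult_left_mono) auto
  also have "\<dots> \<le> q * ((q-1) * (2*\<bar>w\<bar>+\<bar>x\<bar>) powr (q-2) * \<bar>x\<bar>) * \<bar>x\<bar>"
    using assms by (intro mult_right_mono mult_left_mono powr_mono2) auto
  also have "\<dots> = q*(q-1) * (2*\<bar>w\<bar>+\<bar>x\<bar>) powr (q-2) * x\<^sup>2"
    by (simp add: power2_eq_square abs_mult_self_eq mult.assoc[symmetric])
  finally show ?thesis using tangent by linarith
qed

lemma powr_mult_square_le_young:
  fixes q t c a b :: real
  assumes "q > 2" "t \<ge> 1" "c > 0" "a \<ge> 0" "b \<ge> 0"
  shows "c * a powr (q-2) * b\<^sup>2 \<le> a powr q / (2*t)
          + c * (2/q) * (2*c*((q-2)/q)) powr (q/2-1) * t powr (q/2-1) * b powr q"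
proof -
  define \<theta> where "\<theta> = (q-2)/q"
  have \<theta>: "0 < \<theta>" "\<theta> < 1" using assms by (auto simp: \<theta>_def field_simps)
  define l where "l = 1/(2*t*c*\<theta>)"
  have l: "l > 0" using assms \<theta> by (auto simp: l_def)
  define A where "A = l * a powr q"
  define B where "B = l powr (-(q/2-1)) * b powr q"
  have AB: "A \<ge> 0" "B \<ge> 0" using l by (auto simp: A_def B_def)
  have exps: "q * \<theta> = q - 2" "q * (1-\<theta>) = 2" "-(q/2-1) * (1-\<theta>) = -\<theta>"
    using assms by (auto simp: \<theta>_def field_simps)
  have "A powr \<theta> = l powr \<theta> * a powr (q-2)"
    using l assms by (simp add: A_def powr_mult powr_powr exps)
  moreover have "B powr (1-\<theta>) = l powr (-\<theta>) * b\<^sup>2"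
  proof -
    have "B powr (1-\<theta>) = l powr (-(q/2-1) * (1-\<theta>)) * b powr (q * (1-\<theta>))"
      using l assms by (simp add: B_def powr_mult powr_powr)
    also have "\<dots> = l powr (-\<theta>) * b powr 2" by (simp only: exps)
    also have "b powr 2 = b\<^sup>2" using assms by (cases "b = 0") (auto simp: powr_numeral)
    finally show ?thesis by simp
  qed
  ultimately have "A powr \<theta> * B powr (1-\<theta>) = a powr (q-2) * b\<^sup>2"
    using l by (simp add: powr_minus field_simps)
  then have "a powr (q-2) * b\<^sup>2 \<le> \<theta>*A + (1-\<theta>)*B"
    using powr_mult_powr_le_convex_comb[of A B \<theta>] AB \<theta> by simp
  then have "c * a powr (q-2) * b\<^sup>2 \<le> c * (\<theta>*A) + c * ((1-\<theta>)*B)"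
    using assms by (simp add: mult.assoc mult_left_mono distrib_left[symmetric])
  moreover have "c * (\<theta>*A) = a powr q / (2*t)"
    using assms \<theta> by (simp add: A_def l_def field_simps)
  moreover have "c * ((1-\<theta>)*B) = c * (2/q) * (2*c*((q-2)/q)) powr (q/2-1) * t powr (q/2-1) * b powr q"
  proof -
    have "l powr (-(q/2-1)) = (2*t*c*\<theta>) powr (q/2-1)"
      using l by (simp add: l_def powr_minus powr_divide field_simps)
    also have "\<dots> = (2*c*\<theta>) powr (q/2-1) * t powr (q/2-1)"
      using assms \<theta> by (simp add: powr_mult[symmetric] ac_simps)
    finally show ?thesis using assms by (simp add: B_def \<theta>_def field_simps)
  qed
  ultimately show ?thesis by simp
qed

lemma second_order_term_le:
  fixes q :: real
  assumes q: "q \<ge> 2"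
  obtains D where "D > 0" "\<And>t w x. t \<ge> 1 \<Longrightarrow>
    q*(q-1) * (2*\<bar>w\<bar>+\<bar>x\<bar>) powr (q-2) * x\<^sup>2 \<le> \<bar>w\<bar> powr q / (2*t) + D * t powr (q/2-1) * \<bar>x\<bar> powr q"
proof -
  define c where "c = q*(q-1)*3 powr (q-2)"
  have c: "c > 0" using q by (simp add: c_def)
  define E where "E = (if q = 2 then c else c * (2/q) * (2*c*((q-2)/q)) powr (q/2-1))"
  have E: "E > 0" using c q by (simp add: E_def)
  have "q*(q-1) * (2*\<bar>w\<bar>+\<bar>x\<bar>) powr (q-2) * x\<^sup>2 \<le> \<bar>w\<bar> powr q / (2*t) + (c + E) * t powr (q/2-1) * \<bar>x\<bar> powr q"
    if t: "t \<ge> 1" for t w x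
  proof -
    have tp: "t powr (q/2-1) \<ge> 1" using t q by (simp add: ge_one_powr_ge_zero)
    have x2: "x\<^sup>2 = \<bar>x\<bar> powr 2" by (cases "x = 0") (auto simp: powr_numeral)
    have "(2*\<bar>w\<bar>+\<bar>x\<bar>) powr (q-2) \<le> (3 * max \<bar>w\<bar> \<bar>x\<bar>) powr (q-2)"
      using q by (intro powr_mono2) auto
    also have "\<dots> = 3 powr (q-2) * max \<bar>w\<bar> \<bar>x\<bar> powr (q-2)" by (simp add: powr_mult)
    also have "\<dots> \<le> 3 powr (q-2) * (\<bar>w\<bar> powr (q-2) + \<bar>x\<bar> powr (q-2))"
      by (intro mult_left_mono) (auto simp: max_def)
    finally have "q*(q-1) * (2*\<bar>w\<bar>+\<bar>x\<bar>) powr (q-2) * x\<^sup>2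
        \<le> q*(q-1) * (3 powr (q-2) * (\<bar>w\<bar> powr (q-2) + \<bar>x\<bar> powr (q-2))) * x\<^sup>2"
      using q by (intro mult_right_mono mult_left_mono) auto
    also have "\<dots> = c * \<bar>w\<bar> powr (q-2) * x\<^sup>2 + c * (\<bar>x\<bar> powr (q-2) * x\<^sup>2)"
      unfolding c_def by (simp add: algebra_simps)
    also have "\<bar>x\<bar> powr (q-2) * x\<^sup>2 = \<bar>x\<bar> powr q"
      by (simp only: x2 powr_add[symmetric]) simp
    also have "c * \<bar>w\<bar> powr (q-2) * x\<^sup>2 \<le> \<bar>w\<bar> powr q / (2*t) + E * t powr (q/2-1) * \<bar>x\<bar> powr q"
    proof (cases "q = 2")
      case True
      have "c * \<bar>w\<bar> powr (q-2) * x\<^sup>2 \<le> c * \<bar>x\<bar> powr q"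
        using True c by (simp add: x2[symmetric])
      also have "\<dots> \<le> E * t powr (q/2-1) * \<bar>x\<bar> powr q" using True t by (simp add: E_def)
      finally show ?thesis using t by (smt (verit) divide_nonneg_pos powr_ge_zero)
    next
      case False
      then show ?thesis
        using powr_mult_square_le_young[of q t c "\<bar>w\<bar>" "\<bar>x\<bar>"] q t c by (simp add: E_def)
    qed
    also have "c * \<bar>x\<bar> powr q \<le> c * t powr (q/2-1) * \<bar>x\<bar> powr q"
      using c tp by (simp add: mult_right_mono)
    finally show ?thesis by (simp add: algebra_simps)
  qed
  then show thesis using that[of "c + E"] c E by simp
qed

lemma abs_powr_add_le_uniform:
  fixes q :: real
  assumes q: "q \<ge> 2"
  obtains D where "D > 0" "\<And>t w x. t \<ge> 1 \<Longrightarrow> \<bar>w+x\<bar> powr q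
    \<le> (1 + 1/(2*t)) * \<bar>w\<bar> powr q + q * signed_powr q w * x + D * t powr (q/2-1) * \<bar>x\<bar> powr q"
proof -
  obtain D where "D > 0" and D: "\<And>t w x. t \<ge> 1 \<Longrightarrow>
    q*(q-1) * (2*\<bar>w\<bar>+\<bar>x\<bar>) powr (q-2) * x\<^sup>2 \<le> \<bar>w\<bar> powr q / (2*t) + D * t powr (q/2-1) * \<bar>x\<bar> powr q"
    using second_order_term_le[OF q] by blast
  show thesis
  proof (rule that[OF \<open>D > 0\<close>])
    fix t w x :: real
    assume "t \<ge> 1"
    then show "\<bar>w+x\<bar> powr q
      \<le> (1 + 1/(2*t)) * \<bar>w\<bar> powr q + q * signed_powr q w * x + D * t powr (q/2-1) * \<bar>x\<bar> powr q"
      using D[of t w x] abs_powr_add_le_second_order[OF q, of w x] by (simp add: algebra_simps)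
  qed
qed

lemma powr_increment_le:
  fixes a b q :: real
  assumes q: "q > 1" and a: "a \<ge> 0" and ab: "a < b"
  shows "b powr q - a powr q \<le> (q/(q-1)) * (b * (b powr (q-1) - a powr (q-1)))"
proof -
  have b: "b > 0" using a ab by simp
  have key: "q * (a powr (q-1) * b) \<le> b powr q + (q-1) * a powr q"
  proof (cases "a = 0")
    case False
    then have "\<bar>b\<bar> powr q \<ge> a powr q + q * a powr (q-1) * (b - a)"
      using powr_ge_tangent[where a=b and b=a and q=q] q a by simp
    moreover have "a * (q * a powr (q-1)) = q * a powr q" using powr_diff_one_mult[of a q] a by simp
    ultimately show ?thesis using b by (simp add: algebra_simps)
  qed (use b in simp)
  have "b * b powr (q-1) = b powr q" using powr_diff_one_mult[of b q] b by simp
  with key have "(q-1) * (b powr q - a powr q) \<le> q * (b * (b powr (q-1) - a powr (q-1)))"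
    by (simp add: algebra_simps)
  then show ?thesis using q by (simp add: field_simps)
qed

text \<open>A pathwise form of Doob's \<open>L^q\<close> inequality: after taking expectations, the sum is a
  martingale transform and vanishes.\<close>

lemma running_max_powr_le:
  fixes x :: "nat \<Rightarrow> real" and q :: real
  assumes q: "q > 1" and x: "\<And>k. x k \<ge> 0"
  shows "(Max (x ` {..N})) powr q \<le> (q/(q-1)) * (x N * (Max (x ` {..N})) powr (q-1)
          - (\<Sum>k<N. (Max (x ` {..k})) powr (q-1) * (x (Suc k) - x k)))"
proof (induction N)
  case 0
  have "1 \<le> q/(q-1)" using q by simp
  from mult_right_mono[OF this, of "x 0 * x 0 powr (q-1)"]
  show ?case using x[of 0] powr_diff_one_mult[of "x 0" q] by (simp add: mult.commute)
next
  case (Suc N)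
  define a where "a = Max (x ` {..N})"
  have a: "a \<ge> 0" using x by (auto simp: a_def intro: order_trans[OF _ Max_ge[of _ "x 0"]])
  have max_Suc: "Max (x ` {..Suc N}) = max a (x (Suc N))"
    by (simp add: a_def atMost_Suc image_insert Max_insert max.commute)
  have "(max a (x (Suc N))) powr q \<le> a powr q
      + (q/(q-1)) * (x (Suc N) * ((max a (x (Suc N))) powr (q-1) - a powr (q-1)))"
    using powr_increment_le[OF q a, of "x (Suc N)"] by (cases "x (Suc N) \<le> a") (auto simp: max_def)
  also have "\<dots> \<le> (q/(q-1)) * (x N * a powr (q-1)
        - (\<Sum>k<N. (Max (x ` {..k})) powr (q-1) * (x (Suc k) - x k)))
      + (q/(q-1)) * (x (Suc N) * ((max a (x (Suc N))) powr (q-1) - a powr (q-1)))"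
    using Suc.IH by (simp add: a_def)
  also have "\<dots> = (q/(q-1)) * (x (Suc N) * (max a (x (Suc N))) powr (q-1)
          - (\<Sum>k<Suc N. (Max (x ` {..k})) powr (q-1) * (x (Suc k) - x k)))"
    by (simp add: a_def algebra_simps)
  finally show ?case by (simp add: max_Suc)
qed

lemma running_max_powr_le_doob:
  fixes x :: "nat \<Rightarrow> real" and q :: real
  assumes q: "q > 1" and x: "\<And>k. x k \<ge> 0"
  shows "(Max (x ` {..N})) powr q \<le> 2 powr q / (q-1) * x N powr q
          - (2*q/(q-1)) * (\<Sum>k<N. (Max (x ` {..k})) powr (q-1) * (x (Suc k) - x k))"
proof -
  define m where "m = Max (x ` {..N})"
  define S where "S = (\<Sum>k<N. (Max (x ` {..k})) powr (q-1) * (x (Suc k) - x k))"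
  have m: "m \<ge> 0" using x by (auto simp: m_def intro: order_trans[OF _ Max_ge[of _ "x 0"]])
  have path: "m powr q \<le> (q/(q-1)) * (x N * m powr (q-1) - S)"
    using running_max_powr_le[OF q x, where N=N] by (simp add: m_def S_def)
  define A where "A = 2 powr (q-1) * x N powr q"
  define B where "B = m powr q / 2"
  have exps: "q * (1 - 1/q) = q - 1" "1 - 1/q = (q-1)/q" using q by (auto simp: field_simps)
  have "A powr (1/q) = 2 powr ((q-1)/q) * x N"
    using q x[of N] by (simp add: A_def powr_mult powr_powr)
  moreover have "B powr (1 - 1/q) = m powr (q-1) / 2 powr ((q-1)/q)"
    using m q by (simp add: B_def powr_divide powr_powr exps)
  ultimately have "A powr (1/q) * B powr (1 - 1/q) = x N * m powr (q-1)"
    by (simp add: field_simps)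
  then have young: "x N * m powr (q-1) \<le> 2 powr (q-1) * x N powr q / q + (q-1)/q * (m powr q / 2)"
    using powr_mult_powr_le_convex_comb[of A B "1/q"] q by (simp add: A_def B_def exps)
  define c where "c = q/(q-1)"
  define U where "U = 2 powr (q-1) * x N powr q"
  have c: "c * (U / q) = U / (q-1)" "c * ((q-1)/q) = 1" using q by (auto simp: c_def)
  have "c * (x N * m powr (q-1)) \<le> c * (U / q + (q-1)/q * (m powr q / 2))"
    using young q by (intro mult_left_mono) (auto simp: c_def U_def)
  also have "\<dots> = c * (U / q) + (c * ((q-1)/q)) * (m powr q / 2)" by (simp add: algebra_simps)
  finally have "c * (x N * m powr (q-1)) \<le> U / (q-1) + m powr q / 2" using c by simp
  moreover have "m powr q \<le> c * (x N * m powr (q-1)) - c * S"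
    using path by (simp add: c_def right_diff_distrib)
  ultimately have "m powr q \<le> 2 * (2 powr (q-1) / (q-1) * x N powr q) - (2*q/(q-1)) * S"
    by (simp add: U_def c_def)
  also have "2 * (2 powr (q-1) / (q-1) * x N powr q) = 2 powr q / (q-1) * x N powr q"
    using powr_diff_one_mult[of 2 q] by simp
  finally show ?thesis by (simp add: m_def S_def)
qed

definition partial_sum_max :: "(nat \<Rightarrow> real) \<Rightarrow> nat \<Rightarrow> real" where
  "partial_sum_max x n = Max ((\<lambda>k. \<bar>\<Sum>j<k. x j\<bar>) ` {..n})"

lemma abs_partial_sum_le_partial_sum_max: "k \<le> n \<Longrightarrow> \<bar>\<Sum>j<k. x j\<bar> \<le> partial_sum_max x n"
  unfolding partial_sum_max_def by (intro Max_ge) auto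

lemma partial_sum_max_nonneg: "partial_sum_max x n \<ge> 0"
  using abs_partial_sum_le_partial_sum_max[of 0 n x] by simp

lemma partial_sum_max_powr_le_sum:
  assumes "q \<ge> 0"
  shows "partial_sum_max x n powr q \<le> (\<Sum>k\<le>n. \<bar>\<Sum>j<k. x j\<bar> powr q)"
proof -
  have "partial_sum_max x n \<in> (\<lambda>k. \<bar>\<Sum>j<k. x j\<bar>) ` {..n}"
    unfolding partial_sum_max_def by (rule Max_in) auto
  then obtain k where "k \<le> n" "partial_sum_max x n = \<bar>\<Sum>j<k. x j\<bar>" by auto
  then show ?thesis
    using member_le_sum[of k "{..n}" "\<lambda>k. \<bar>\<Sum>j<k. x j\<bar> powr q"] by simp
qed

lemma sgn_mult_le_abs_add_diff: "sgn w * y \<le> \<bar>w + y\<bar> - \<bar>w::real\<bar>"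
  by (cases "w > 0"; cases "w < 0") auto

lemma partial_sum_max_powr_le_doob:
  fixes x :: "nat \<Rightarrow> real" and q :: real
  assumes q: "q > 1"
  shows "partial_sum_max x n powr q \<le> 2 powr q / (q-1) * \<bar>\<Sum>j<n. x j\<bar> powr q
    - (2*q/(q-1)) * (\<Sum>k<n. partial_sum_max x k powr (q-1) * sgn (\<Sum>j<k. x j) * x k)"
proof -
  have "(\<Sum>k<n. partial_sum_max x k powr (q-1) * sgn (\<Sum>j<k. x j) * x k)
      \<le> (\<Sum>k<n. partial_sum_max x k powr (q-1) * (\<bar>\<Sum>j<Suc k. x j\<bar> - \<bar>\<Sum>j<k. x j\<bar>))"
    using sgn_mult_le_abs_add_diff
    by (intro sum_mono) (simp add: mult.assoc mult_left_mono)
  moreover have "2*q/(q-1) \<ge> 0" using q by simp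
  ultimately show ?thesis
    using running_max_powr_le_doob[OF q, of "\<lambda>k. \<bar>\<Sum>j<k. x j\<bar>" n]
    unfolding partial_sum_max_def by (smt (verit) mult_left_mono)
qed

lemma powr_bound_of_recurrence:
  fixes a :: "nat \<Rightarrow> real" and r c m :: real
  assumes r: "r \<ge> 1" and c: "c \<ge> 0" and m: "m \<ge> 0" and a0: "a 0 \<le> 0" and a1: "a 1 \<le> m"
    and step: "\<And>n. n \<ge> 1 \<Longrightarrow> a (Suc n) \<le> (1 + 1/(2*real n)) * a n + c * real n powr (r-1) * m"
  shows "a n \<le> max m (2*c*m) * real n powr r"
proof (induction n)
  case (Suc n)
  define K where "K = max m (2*c*m)"
  have K: "m \<le> K" "c * m \<le> K/2" "K \<ge> 0" using m by (auto simp: K_def)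
  show ?case
  proof (cases "n = 0")
    case True
    then show ?thesis using a1 K by (simp add: K_def)
  next
    case False
    then have n: "real n \<ge> 1" by simp
    define b where "b = real n powr (r-1)"
    have b: "b \<ge> 0" "b \<le> real (Suc n) powr (r-1)"
      using r by (auto simp: b_def intro: powr_mono2)
    have "real n powr r = b * real n"
      using powr_diff_one_mult[of "real n" r] by (simp add: b_def)
    with Suc.IH have IH: "a n \<le> K * (b * real n)" by (simp add: K_def)
    have "a (Suc n) \<le> (1 + 1/(2*real n)) * a n + c * b * m"
      using step n by (simp add: b_def)
    also have "\<dots> \<le> (1 + 1/(2*real n)) * (K * (b * real n)) + c * b * m"
      using IH n by (intro add_right_mono mult_left_mono) auto
    also have "\<dots> = K * b * real n + b * (K/2 + c * m)"
      using n by (simp add: field_simps)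
    also have "\<dots> \<le> K * b * real n + b * K"
      using K b by (intro add_left_mono mult_left_mono) auto
    also have "\<dots> = K * (b * real (Suc n))" by (simp add: algebra_simps)
    also have "\<dots> \<le> K * (real (Suc n) powr (r-1) * real (Suc n))"
      using K b by (intro mult_left_mono mult_right_mono) auto
    also have "real (Suc n) powr (r-1) * real (Suc n) = real (Suc n) powr r"
      using powr_diff_one_mult[of "real (Suc n)" r] by simp
    finally show ?thesis by (simp add: K_def)
  qed
qed (use a0 in simp)

text \<open>The free parameter \<open>s\<close> is later taken to be \<open>n^(p/2)\<close>, with \<open>L = n \<parallel>\<mu>\<parallel>\<close>, which
  balances the two terms coming from \<open>L^p \<beta>^p\<close>.\<close>

lemma powr_le_split_product:
  fixes A \<alpha> \<beta> L s p :: real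
  assumes p: "p \<ge> 1" and A: "0 \<le> A" "A \<le> 4 * (\<alpha> + L) * \<beta>"
    and nonneg: "\<alpha> \<ge> 0" "\<beta> \<ge> 0" "L \<ge> 0" and s: "s > 0"
  shows "A powr p \<le> 8 powr p * (\<alpha> powr (2*p) + \<beta> powr (2*p) + L powr p * (\<beta> powr (2*p) / s + s))"
proof -
  have sq: "(x powr p)\<^sup>2 = x powr (2*p)" for x :: real
    by (simp add: power2_eq_square powr_add[symmetric])
  have \<alpha>\<beta>: "(\<alpha> * \<beta>) powr p \<le> \<alpha> powr (2*p) + \<beta> powr (2*p)"
  proof -
    have "2 * (\<alpha> powr p * \<beta> powr p) \<le> (\<alpha> powr p)\<^sup>2 + (\<beta> powr p)\<^sup>2"
      using sum_squares_bound[of "\<alpha> powr p" "\<beta> powr p"] by simp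
    moreover have "0 \<le> \<alpha> powr p * \<beta> powr p" by simp
    ultimately have "\<alpha> powr p * \<beta> powr p \<le> \<alpha> powr (2*p) + \<beta> powr (2*p)" using sq[of \<alpha>] sq[of \<beta>] by linarith
    then show ?thesis using nonneg by (simp add: powr_mult)
  qed
  have L\<beta>: "(L * \<beta>) powr p \<le> L powr p * (\<beta> powr (2*p) / s + s)"
  proof -
    have "\<beta> powr p \<le> (\<beta> powr p)\<^sup>2 / s + s"
    proof (cases "\<beta> powr p \<le> s")
      case False
      then have "\<beta> powr p * s \<le> \<beta> powr p * \<beta> powr p" using s by (intro mult_left_mono) auto
      then have "\<beta> powr p \<le> (\<beta> powr p)\<^sup>2 / s" using s by (simp add: power2_eq_square field_simps)
      then show ?thesis using s by simp
    next
      case True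
      moreover have "(\<beta> powr p)\<^sup>2 / s \<ge> 0" using s by simp
      ultimately show ?thesis by linarith
    qed
    then show ?thesis using nonneg by (simp add: powr_mult sq mult_left_mono)
  qed
  have "A powr p \<le> (4 * (\<alpha> * \<beta> + L * \<beta>)) powr p"
    using A p by (intro powr_mono2) (auto simp: algebra_simps)
  also have "\<dots> = 4 powr p * (\<alpha> * \<beta> + L * \<beta>) powr p" using nonneg by (subst powr_mult) auto
  also have "\<dots> \<le> 4 powr p * (2 powr p * ((\<alpha> * \<beta>) powr p + (L * \<beta>) powr p))"
    using nonneg p by (intro mult_left_mono add_powr_le_two_powr) auto
  also have "\<dots> \<le> 4 powr p * (2 powr p
      * (\<alpha> powr (2*p) + \<beta> powr (2*p) + L powr p * (\<beta> powr (2*p) / s + s)))"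
    using \<alpha>\<beta> L\<beta> by (intro mult_left_mono) auto
  also have "\<dots> = 8 powr p * (\<alpha> powr (2*p) + \<beta> powr (2*p) + L powr p * (\<beta> powr (2*p) / s + s))"
    by (simp add: mult.assoc[symmetric] powr_mult[symmetric])
  finally show ?thesis .
qed

lemma borel_measurable_partial_sum_PiM:
  fixes j k :: nat
  assumes "j \<le> k"
  shows "(\<lambda>f. \<Sum>i<j. f i :: real) \<in> borel_measurable (PiM {..<k} (\<lambda>_. borel))"
proof (rule borel_measurable_sum)
  fix i assume "i \<in> {..<j}"
  then have "i \<in> {..<k}" using assms by auto
  then show "(\<lambda>f. f i :: real) \<in> borel_measurable (PiM {..<k} (\<lambda>_. borel))"
    by (rule measurable_component_singleton)
qed

context prob_space
begin

lemma integrable_of_integrable_norm_powr: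
  fixes f :: "'a \<Rightarrow> 'b::{banach, second_countable_topology}"
  assumes "f \<in> borel_measurable M" "integrable M (\<lambda>\<omega>. norm (f \<omega>) powr q)" "q \<ge> 1"
  shows "integrable M f"
proof (rule Bochner_Integration.integrable_bound[of _ "\<lambda>\<omega>. 1 + norm (f \<omega>) powr q"])
  show "AE \<omega> in M. norm (f \<omega>) \<le> norm (1 + norm (f \<omega>) powr q)"
    using powr_le_one_plus_powr[of 1 q "norm (f \<omega>)" for \<omega>] assms(3) by (auto intro!: AE_I2)
qed (use assms in auto)

lemma indep_var_fun_initial_segment:
  fixes X :: "nat \<Rightarrow> 'a \<Rightarrow> real" and g :: "(nat \<Rightarrow> real) \<Rightarrow> real"
  assumes ind: "indep_vars (\<lambda>_. borel) X UNIV"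
    and g: "g \<in> borel_measurable (PiM {..<n} (\<lambda>_. borel))"
  shows "indep_var borel (\<lambda>\<omega>. g (restrict (\<lambda>i. X i \<omega>) {..<n})) borel (X n)"
proof -
  have "indep_var (PiM {..<n} (\<lambda>_. borel)) (\<lambda>\<omega>. restrict (\<lambda>i. X i \<omega>) {..<n})
                  (PiM {n} (\<lambda>_. borel)) (\<lambda>\<omega>. restrict (\<lambda>i. X i \<omega>) {n})"
    by (rule indep_var_restrict[OF ind]) auto
  then have "indep_var borel (g \<circ> (\<lambda>\<omega>. restrict (\<lambda>i. X i \<omega>) {..<n}))
                       borel ((\<lambda>f. f n) \<circ> (\<lambda>\<omega>. restrict (\<lambda>i. X i \<omega>) {n}))"
    by (rule indep_var_compose) (auto simp: g)
  moreover have "((\<lambda>f. f n) \<circ> (\<lambda>\<omega>. restrict (\<lambda>i. X i \<omega>) {n})) = X n"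
    by (auto simp: fun_eq_iff)
  ultimately show ?thesis by (simp add: comp_def)
qed

lemma indep_var_partial_sum_next:
  fixes X :: "nat \<Rightarrow> 'a \<Rightarrow> real"
  assumes "indep_vars (\<lambda>_. borel) X UNIV"
  shows "indep_var borel (\<lambda>\<omega>. \<Sum>k<n. X k \<omega>) borel (X n)"
proof -
  have "(\<lambda>\<omega>. \<Sum>i<n. restrict (\<lambda>i. X i \<omega>) {..<n} i) = (\<lambda>\<omega>. \<Sum>k<n. X k \<omega>)"
    by (auto intro!: sum.cong)
  then show ?thesis
    using indep_var_fun_initial_segment[OF assms borel_measurable_partial_sum_PiM[of n n]] by simp
qed

lemma moment_partial_sum_step:
  fixes X :: "nat \<Rightarrow> 'a \<Rightarrow> real" and q m D t :: real
  assumes q: "q \<ge> 2" and meas: "\<And>k. X k \<in> borel_measurable M"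
    and ind: "indep_vars (\<lambda>_. borel) X UNIV"
    and int_moment: "\<And>k. integrable M (\<lambda>\<omega>. \<bar>X k \<omega>\<bar> powr q)"
    and moment: "\<And>k. (\<integral>\<omega>. \<bar>X k \<omega>\<bar> powr q \<partial>M) \<le> m"
    and centered: "\<And>k. expectation (X k) = 0"
    and D: "D > 0" "\<And>w x. \<bar>w+x\<bar> powr q
      \<le> (1 + 1/(2*t)) * \<bar>w\<bar> powr q + q * signed_powr q w * x + D * t powr (q/2-1) * \<bar>x\<bar> powr q"
    and int_n: "integrable M (\<lambda>\<omega>. \<bar>\<Sum>k<n. X k \<omega>\<bar> powr q)"
  shows "integrable M (\<lambda>\<omega>. \<bar>\<Sum>k<Suc n. X k \<omega>\<bar> powr q)"
    "(\<integral>\<omega>. \<bar>\<Sum>k<Suc n. X k \<omega>\<bar> powr q \<partial>M) \<le>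
       (1 + 1/(2*t)) * (\<integral>\<omega>. \<bar>\<Sum>k<n. X k \<omega>\<bar> powr q \<partial>M) + D * t powr (q/2-1) * m"
proof -
  define W where "W = (\<lambda>\<omega>. \<Sum>k<n. X k \<omega>)"
  have [measurable]: "W \<in> borel_measurable M" "X n \<in> borel_measurable M"
    unfolding W_def using meas by measurable
  have int_W: "integrable M (\<lambda>\<omega>. \<bar>W \<omega>\<bar> powr q)" using int_n by (simp add: W_def)
  have int_psi: "integrable M (\<lambda>\<omega>. signed_powr q (W \<omega>))"
  proof (rule Bochner_Integration.integrable_bound[of _ "\<lambda>\<omega>. 1 + \<bar>W \<omega>\<bar> powr q"])
    show "AE x in M. norm (signed_powr q (W x)) \<le> norm (1 + \<bar>W x\<bar> powr q)"
      using powr_le_one_plus_powr[of "q-1" q] q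
      by (auto intro!: AE_I2 simp: abs_signed_powr add_nonneg_nonneg)
  qed (use int_W in auto)
  have int_X: "integrable M (X n)"
    using integrable_of_integrable_norm_powr[OF meas, of n q] int_moment q by simp
  have indep: "indep_var borel (\<lambda>\<omega>. signed_powr q (W \<omega>)) borel (X n)"
    using indep_var_compose[OF indep_var_partial_sum_next[OF ind, of n, folded W_def],
        of "signed_powr q" borel id borel]
    by (simp add: comp_def)
  have int_psi_X: "integrable M (\<lambda>\<omega>. signed_powr q (W \<omega>) * X n \<omega>)"
    by (rule indep_var_integrable[OF indep int_psi int_X])
  have E_psi_X: "(\<integral>\<omega>. signed_powr q (W \<omega>) * X n \<omega> \<partial>M) = 0"
    using indep_var_lebesgue_integral[OF indep int_psi int_X] centered[of n] by simp
  define B where "B = (\<lambda>\<omega>. (1 + 1/(2*t)) * \<bar>W \<omega>\<bar> powr q + q * (signed_powr q (W \<omega>) * X n \<omega>)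
      + D * t powr (q/2-1) * \<bar>X n \<omega>\<bar> powr q)"
  have int_B: "integrable M B" unfolding B_def using int_W int_psi_X int_moment[of n] by auto
  have sum_Suc: "\<And>\<omega>. (\<Sum>k<Suc n. X k \<omega>) = W \<omega> + X n \<omega>" by (simp add: W_def)
  have le_B: "\<bar>W \<omega> + X n \<omega>\<bar> powr q \<le> B \<omega>" for \<omega>
    using D(2) by (simp add: B_def mult.assoc)
  have int_Suc: "integrable M (\<lambda>\<omega>. \<bar>W \<omega> + X n \<omega>\<bar> powr q)"
    by (rule Bochner_Integration.integrable_bound[OF int_B])
      (use le_B in \<open>auto intro!: AE_I2 order_trans[OF _ abs_ge_self]\<close>)
  then show "integrable M (\<lambda>\<omega>. \<bar>\<Sum>k<Suc n. X k \<omega>\<bar> powr q)" by (simp only: sum_Suc)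
  have "(\<integral>\<omega>. \<bar>\<Sum>k<Suc n. X k \<omega>\<bar> powr q \<partial>M) \<le> integral\<^sup>L M B"
    using int_Suc int_B le_B by (simp only: sum_Suc) (intro integral_mono, auto)
  also have "integral\<^sup>L M B = (1 + 1/(2*t)) * (\<integral>\<omega>. \<bar>W \<omega>\<bar> powr q \<partial>M)
       + D * t powr (q/2-1) * (\<integral>\<omega>. \<bar>X n \<omega>\<bar> powr q \<partial>M)"
    unfolding B_def using int_W int_psi_X int_moment[of n] E_psi_X by simp
  also have "\<dots> \<le> (1 + 1/(2*t)) * (\<integral>\<omega>. \<bar>W \<omega>\<bar> powr q \<partial>M) + D * t powr (q/2-1) * m"
    using moment[of n] D by (simp add: mult_left_mono)
  finally show "(\<integral>\<omega>. \<bar>\<Sum>k<Suc n. X k \<omega>\<bar> powr q \<partial>M) \<le>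
       (1 + 1/(2*t)) * (\<integral>\<omega>. \<bar>\<Sum>k<n. X k \<omega>\<bar> powr q \<partial>M) + D * t powr (q/2-1) * m"
    by (simp add: W_def)
qed

lemma marcinkiewicz_zygmund_bound:
  fixes X :: "nat \<Rightarrow> 'a \<Rightarrow> real" and q m :: real
  assumes q: "q \<ge> 2" and meas: "\<And>k. X k \<in> borel_measurable M"
    and ind: "indep_vars (\<lambda>_. borel) X UNIV"
    and int_moment: "\<And>k. integrable M (\<lambda>\<omega>. \<bar>X k \<omega>\<bar> powr q)"
    and moment: "\<And>k. (\<integral>\<omega>. \<bar>X k \<omega>\<bar> powr q \<partial>M) \<le> m"
    and centered: "\<And>k. expectation (X k) = 0"
  obtains K where "\<And>n. integrable M (\<lambda>\<omega>. \<bar>\<Sum>k<n. X k \<omega>\<bar> powr q)"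
    "\<And>n. (\<integral>\<omega>. \<bar>\<Sum>k<n. X k \<omega>\<bar> powr q \<partial>M) \<le> K * real n powr (q/2)"
proof -
  obtain D where D: "D > 0" "\<And>t w x. t \<ge> 1 \<Longrightarrow> \<bar>w+x\<bar> powr q
      \<le> (1 + 1/(2*t)) * \<bar>w\<bar> powr q + q * signed_powr q w * x + D * t powr (q/2-1) * \<bar>x\<bar> powr q"
    using abs_powr_add_le_uniform[OF q] by blast
  note step = moment_partial_sum_step[OF q meas ind int_moment moment centered D(1) D(2)]
  have "0 \<le> (\<integral>\<omega>. \<bar>X 0 \<omega>\<bar> powr q \<partial>M)" by (intro Bochner_Integration.integral_nonneg) simp
  with moment[of 0] have m: "m \<ge> 0" by linarith
  have int: "integrable M (\<lambda>\<omega>. \<bar>\<Sum>k<n. X k \<omega>\<bar> powr q)" for n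
    by (induction n) (use step(1)[of 1] in simp_all)
  have "(\<integral>\<omega>. \<bar>\<Sum>k<n. X k \<omega>\<bar> powr q \<partial>M) \<le> max m (2*D*m) * real n powr (q/2)" for n
  proof (rule powr_bound_of_recurrence)
    show "(\<integral>\<omega>. \<bar>\<Sum>k<Suc n. X k \<omega>\<bar> powr q \<partial>M)
        \<le> (1 + 1/(2*real n)) * (\<integral>\<omega>. \<bar>\<Sum>k<n. X k \<omega>\<bar> powr q \<partial>M) + D * real n powr (q/2-1) * m"
      if "n \<ge> 1" for n
      using step(2)[OF _ int] that by simp
  qed (use q D m moment[of 0] in auto)
  with int show thesis using that by blast
qed

lemma borel_measurable_partial_sum_max_PiM:
  fixes k :: nat
  shows "(\<lambda>f. partial_sum_max f k) \<in> borel_measurable (PiM {..<k} (\<lambda>_. borel))"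
  unfolding partial_sum_max_def
  by (intro borel_measurable_Max borel_measurable_abs borel_measurable_partial_sum_PiM) auto

lemma indep_var_partial_sum_max_term:
  fixes X :: "nat \<Rightarrow> 'a \<Rightarrow> real"
  assumes "indep_vars (\<lambda>_. borel) X UNIV"
  shows "indep_var borel (\<lambda>\<omega>. partial_sum_max (\<lambda>j. X j \<omega>) k powr r * sgn (\<Sum>j<k. X j \<omega>))
    borel (X k)"
proof -
  define g where "g f = partial_sum_max f k powr r * sgn (\<Sum>i<k. f i)" for f :: "nat \<Rightarrow> real"
  have [measurable]: "(\<lambda>f. partial_sum_max f k) \<in> borel_measurable (PiM {..<k} (\<lambda>_. borel))"
    "(\<lambda>f. \<Sum>i<k. f i :: real) \<in> borel_measurable (PiM {..<k} (\<lambda>_. borel))"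
    by (rule borel_measurable_partial_sum_max_PiM borel_measurable_partial_sum_PiM order_refl)+
  have "g \<in> borel_measurable (PiM {..<k} (\<lambda>_. borel))" unfolding g_def by measurable
  moreover have "g (restrict (\<lambda>i. X i \<omega>) {..<k})
      = partial_sum_max (\<lambda>j. X j \<omega>) k powr r * sgn (\<Sum>j<k. X j \<omega>)" for \<omega>
  proof -
    have sums: "(\<Sum>i<j. restrict (\<lambda>i. X i \<omega>) {..<k} i) = (\<Sum>i<j. X i \<omega>)" if "j \<le> k" for j
      using that by (auto intro!: sum.cong)
    then have "partial_sum_max (restrict (\<lambda>i. X i \<omega>) {..<k}) k = partial_sum_max (\<lambda>j. X j \<omega>) k"
      unfolding partial_sum_max_def
      by (intro arg_cong[where f=Max] image_cong refl arg_cong[where f=abs] sum.cong) auto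
    then show ?thesis using sums[of k] by (simp add: g_def)
  qed
  ultimately show ?thesis using indep_var_fun_initial_segment[OF assms, of g k] by simp
qed

lemma partial_sum_max_moment_bound:
  fixes X :: "nat \<Rightarrow> 'a \<Rightarrow> real" and q m :: real
  assumes q: "q \<ge> 2" and meas: "\<And>k. X k \<in> borel_measurable M"
    and ind: "indep_vars (\<lambda>_. borel) X UNIV"
    and int_moment: "\<And>k. integrable M (\<lambda>\<omega>. \<bar>X k \<omega>\<bar> powr q)"
    and moment: "\<And>k. (\<integral>\<omega>. \<bar>X k \<omega>\<bar> powr q \<partial>M) \<le> m"
    and centered: "\<And>k. expectation (X k) = 0"
  obtains C where "\<And>n. integrable M (\<lambda>\<omega>. partial_sum_max (\<lambda>j. X j \<omega>) n powr q)"
    "\<And>n. (\<integral>\<omega>. partial_sum_max (\<lambda>j. X j \<omega>) n powr q \<partial>M) \<le> C * real n powr (q/2)"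
proof -
  obtain K where K: "\<And>n. integrable M (\<lambda>\<omega>. \<bar>\<Sum>k<n. X k \<omega>\<bar> powr q)"
     "\<And>n. (\<integral>\<omega>. \<bar>\<Sum>k<n. X k \<omega>\<bar> powr q \<partial>M) \<le> K * real n powr (q/2)"
    using marcinkiewicz_zygmund_bound[OF q meas ind int_moment moment centered] by blast
  define mx where "mx k \<omega> = partial_sum_max (\<lambda>j. X j \<omega>) k" for k \<omega>
  have [measurable]: "X k \<in> borel_measurable M" "mx k \<in> borel_measurable M" for k
    unfolding mx_def partial_sum_max_def using meas by measurable
  have int_mx: "integrable M (\<lambda>\<omega>. mx k \<omega> powr q)" for k
  proof (rule Bochner_Integration.integrable_bound[of _ "\<lambda>\<omega>. \<Sum>j\<le>k. \<bar>\<Sum>i<j. X i \<omega>\<bar> powr q"])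
    show "integrable M (\<lambda>\<omega>. \<Sum>j\<le>k. \<bar>\<Sum>i<j. X i \<omega>\<bar> powr q)" using K(1) by auto
    show "AE \<omega> in M. norm (mx k \<omega> powr q) \<le> norm (\<Sum>j\<le>k. \<bar>\<Sum>i<j. X i \<omega>\<bar> powr q)"
      using partial_sum_max_powr_le_sum[of q] q
      by (auto intro!: AE_I2 order_trans[OF _ abs_ge_self] simp: mx_def)
  qed measurable
  define h where "h k \<omega> = mx k \<omega> powr (q-1) * sgn (\<Sum>j<k. X j \<omega>)" for k \<omega>
  have [measurable]: "h k \<in> borel_measurable M" for k unfolding h_def by measurable
  have int_h: "integrable M (h k)" for k
  proof (rule Bochner_Integration.integrable_bound[of _ "\<lambda>\<omega>. 1 + mx k \<omega> powr q"])
    have "\<bar>h k \<omega>\<bar> \<le> 1 + mx k \<omega> powr q" for \<omega>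
      using powr_le_one_plus_powr[of "q-1" q "mx k \<omega>"] q partial_sum_max_nonneg
      by (auto simp: h_def mx_def abs_mult sgn_if)
    then show "AE x in M. norm (h k x) \<le> norm (1 + mx k x powr q)"
      by (auto intro!: AE_I2 order_trans[OF _ abs_ge_self])
  qed (use int_mx in auto)
  have int_X: "integrable M (X k)" for k
    using integrable_of_integrable_norm_powr[OF meas, of k q] int_moment q by simp
  have indep_h: "indep_var borel (h k) borel (X k)" for k
    using indep_var_partial_sum_max_term[OF ind] by (simp add: h_def[abs_def] mx_def)
  have int_hX: "integrable M (\<lambda>\<omega>. h k \<omega> * X k \<omega>)" for k
    by (rule indep_var_integrable[OF indep_h int_h int_X])
  have E_hX: "(\<integral>\<omega>. h k \<omega> * X k \<omega> \<partial>M) = 0" for k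
    using indep_var_lebesgue_integral[OF indep_h int_h int_X] centered[of k] by simp
  define G where "G n \<omega> = 2 powr q / (q-1) * \<bar>\<Sum>j<n. X j \<omega>\<bar> powr q
    - (2*q/(q-1)) * (\<Sum>k<n. h k \<omega> * X k \<omega>)" for n \<omega>
  have "(\<integral>\<omega>. mx n \<omega> powr q \<partial>M) \<le> (\<integral>\<omega>. G n \<omega> \<partial>M)" for n
    using int_mx int_hX K(1) partial_sum_max_powr_le_doob[of q] q
    by (intro integral_mono) (auto simp: G_def h_def mx_def mult.assoc)
  also have "(\<integral>\<omega>. G n \<omega> \<partial>M) = 2 powr q / (q-1) * (\<integral>\<omega>. \<bar>\<Sum>j<n. X j \<omega>\<bar> powr q \<partial>M)" for n
    unfolding G_def using K(1)[of n] int_hX E_hX by (simp add: integral_sum)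
  also have "\<dots> n \<le> 2 powr q / (q-1) * (K * real n powr (q/2))" for n
    using K(2)[of n] q by (intro mult_left_mono) auto
  finally show thesis using that[of "2 powr q / (q-1) * K"] int_mx by (simp add: mx_def mult.assoc)
qed

lemma identically_distributed_integral:
  fixes f :: "'b::topological_space \<Rightarrow> 'c::{banach, second_countable_topology}"
  assumes [measurable]: "X \<in> borel_measurable M" "Y \<in> borel_measurable M" "f \<in> borel_measurable borel"
    and same: "distr M borel X = distr M borel Y"
  shows "integrable M (\<lambda>\<omega>. f (X \<omega>)) \<longleftrightarrow> integrable M (\<lambda>\<omega>. f (Y \<omega>))"
    "(\<integral>\<omega>. f (X \<omega>) \<partial>M) = (\<integral>\<omega>. f (Y \<omega>) \<partial>M)"
  using integrable_distr_eq[of X M borel f] integrable_distr_eq[of Y M borel f]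
    integral_distr[of X M borel f] integral_distr[of Y M borel f]
  by (simp_all add: same)

lemma centered_projection_max_moment_bound:
  fixes Z :: "nat \<Rightarrow> 'a \<Rightarrow> real^2" and q :: real and v :: "real^2"
  assumes meas: "\<And>k. Z k \<in> borel_measurable M"
    and ind: "indep_vars (\<lambda>_. borel) Z UNIV"
    and same: "\<And>k. distr M borel (Z k) = distr M borel (Z 0)"
    and q: "q \<ge> 2"
    and int0: "integrable M (\<lambda>\<omega>. norm (Z 0 \<omega>) powr q)"
  obtains C where
    "\<And>n. integrable M (\<lambda>\<omega>. partial_sum_max (\<lambda>j. (Z j \<omega> - integral\<^sup>L M (Z 0)) \<bullet> v) n powr q)"
    "\<And>n. (\<integral>\<omega>. partial_sum_max (\<lambda>j. (Z j \<omega> - integral\<^sup>L M (Z 0)) \<bullet> v) n powr q \<partial>M)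
      \<le> C * real n powr (q/2)"
proof -
  define \<mu> where "\<mu> = integral\<^sup>L M (Z 0)"
  have [measurable]: "Z k \<in> borel_measurable M" for k by (rule meas)
  note same_integral = identically_distributed_integral[OF meas meas _ same]
  have int_k: "integrable M (\<lambda>\<omega>. norm (Z k \<omega>) powr q)" for k
    using same_integral(1)[of "\<lambda>z. norm z powr q" k] int0 by simp
  have moment_k: "(\<integral>\<omega>. norm (Z k \<omega>) powr q \<partial>M) = (\<integral>\<omega>. norm (Z 0 \<omega>) powr q \<partial>M)" for k
    using same_integral(2)[of "\<lambda>z. norm z powr q" k] by simp
  have int_Z: "integrable M (Z k)" for k
    using integrable_of_integrable_norm_powr[OF meas int_k] q by simp
  have mean_k: "integral\<^sup>L M (Z k) = \<mu>" for k
    using same_integral(2)[of "\<lambda>z. z" k] by (simp add: \<mu>_def)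
  define X where "X j \<omega> = (Z j \<omega> - \<mu>) \<bullet> v" for j \<omega>
  have X_meas: "X k \<in> borel_measurable M" for k unfolding X_def by measurable
  have ind_X: "indep_vars (\<lambda>_. borel) X UNIV"
    unfolding X_def by (rule indep_vars_compose2[OF ind]) measurable
  define c where "c = (2 * norm v) powr q"
  have X_le: "\<bar>X k \<omega>\<bar> powr q \<le> c * (norm (Z k \<omega>) powr q + norm \<mu> powr q)" for k \<omega>
    unfolding X_def c_def using q by (intro inner_diff_powr_le) simp
  have int_X: "integrable M (\<lambda>\<omega>. \<bar>X k \<omega>\<bar> powr q)" for k
    by (rule Bochner_Integration.integrable_bound[of _ "\<lambda>\<omega>. c * (norm (Z k \<omega>) powr q + norm \<mu> powr q)"])
      (use int_k X_le X_meas in \<open>auto intro!: AE_I2 order_trans[OF _ abs_ge_self]\<close>)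
  define m where "m = c * ((\<integral>\<omega>. norm (Z 0 \<omega>) powr q \<partial>M) + norm \<mu> powr q)"
  have moment_X: "(\<integral>\<omega>. \<bar>X k \<omega>\<bar> powr q \<partial>M) \<le> m" for k
  proof -
    have "(\<integral>\<omega>. \<bar>X k \<omega>\<bar> powr q \<partial>M) \<le> (\<integral>\<omega>. c * (norm (Z k \<omega>) powr q + norm \<mu> powr q) \<partial>M)"
      using int_X int_k X_le by (intro integral_mono) auto
    also have "\<dots> = m" using int_k[of k] moment_k[of k] by (simp add: m_def prob_space)
    finally show ?thesis .
  qed
  have centered: "expectation (X k) = 0" for k
    using int_Z[of k] mean_k[of k] unfolding X_def inner_diff_left
    by (simp add: Bochner_Integration.integral_diff prob_space)
  obtain C where "\<And>n. integrable M (\<lambda>\<omega>. partial_sum_max (\<lambda>j. X j \<omega>) n powr q)"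
    "\<And>n. (\<integral>\<omega>. partial_sum_max (\<lambda>j. X j \<omega>) n powr q \<partial>M) \<le> C * real n powr (q/2)"
    using partial_sum_max_moment_bound[OF q X_meas ind_X int_X moment_X centered] by blast
  then show thesis using that unfolding X_def \<mu>_def by blast
qed

end

definition rot90 :: "real^2 \<Rightarrow> real^2" where
  "rot90 u = vector [- u$2, u$1]"

lemma inner_real2: "(x::real^2) \<bullet> y = x$1 * y$1 + x$2 * y$2"
  by (simp add: inner_vec_def sum_2)

lemma rot90_scaleR: "rot90 (c *\<^sub>R u) = c *\<^sub>R rot90 u"
  by (simp add: rot90_def vec_eq_iff forall_2)

lemma inner_rot90_self [simp]: "u \<bullet> rot90 u = 0"
  by (simp add: inner_real2 rot90_def)

definition frame :: "real^2 \<Rightarrow> real^2 \<Rightarrow> real^2" where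
  "frame u s = (s$1) *\<^sub>R u + (s$2) *\<^sub>R rot90 u"

lemma orthogonal_transformation_frame:
  assumes "norm u = 1"
  shows "orthogonal_transformation (frame u)"
proof -
  have u: "u$1 * u$1 + u$2 * u$2 = 1" using inner_real2[of u u] assms by (simp add: dot_square_norm)
  have "linear (frame u)"
    by (rule linearI) (auto simp: frame_def algebra_simps)
  moreover have "frame u v \<bullet> frame u w = v \<bullet> w" for v w
  proof -
    have "frame u v \<bullet> frame u w = (v$1 * w$1 + v$2 * w$2) * (u$1 * u$1 + u$2 * u$2)"
      by (simp add: frame_def rot90_def inner_real2 algebra_simps)
    then show ?thesis using u by (simp add: inner_real2)
  qed
  ultimately show ?thesis by (simp add: orthogonal_transformation_def)
qed

lemma frame_coordinates:
  assumes "norm u = 1"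
  shows "frame u (vector [y \<bullet> u, y \<bullet> rot90 u]) = y"
proof -
  have u: "u$1 * u$1 + u$2 * u$2 = 1" using inner_real2[of u u] assms by (simp add: dot_square_norm)
  have "y$i = frame u (vector [y \<bullet> u, y \<bullet> rot90 u]) $ i" for i
  proof -
    have "y$1 = y$1 * (u$1 * u$1 + u$2 * u$2)" "y$2 = y$2 * (u$1 * u$1 + u$2 * u$2)" using u by auto
    moreover have "i = 1 \<or> i = 2" using exhaust_2 by auto
    ultimately show ?thesis by (auto simp: frame_def rot90_def inner_real2 algebra_simps)
  qed
  then show ?thesis by (simp add: vec_eq_iff)
qed

lemma measure_convex_hull_le_rectangle:
  fixes P :: "(real^2) set" and u :: "real^2"
  assumes fin: "finite P" and u: "norm u = 1" and a: "a \<ge> 0" and b: "b \<ge> 0"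
    and bounded: "\<And>x. x \<in> P \<Longrightarrow> \<bar>x \<bullet> u\<bar> \<le> a \<and> \<bar>x \<bullet> rot90 u\<bar> \<le> b"
  shows "measure lborel (convex hull P) \<le> 4 * a * b"
proof -
  define R where "R = {y::real^2. \<bar>y \<bullet> u\<bar> \<le> a \<and> \<bar>y \<bullet> rot90 u\<bar> \<le> b}"
  have "R = {y. u \<bullet> y \<le> a} \<inter> {y. (-u) \<bullet> y \<le> a} \<inter> {y. rot90 u \<bullet> y \<le> b} \<inter> {y. (- rot90 u) \<bullet> y \<le> b}"
    by (auto simp: R_def abs_le_iff inner_commute)
  then have "convex R" by (simp only:) (intro convex_Int convex_halfspace_le)
  then have hull_R: "convex hull P \<subseteq> R"
    by (intro hull_minimal) (use bounded in \<open>auto simp: R_def\<close>)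
  define box where "box = cbox (vector [-a, -b]) (vector [a, b] :: real^2)"
  have R_box: "R \<subseteq> frame u ` box"
  proof
    fix y assume "y \<in> R"
    then have "vector [y \<bullet> u, y \<bullet> rot90 u] \<in> box"
      by (auto simp: box_def mem_box_cart forall_2 R_def abs_le_iff)
    then show "y \<in> frame u ` box" using frame_coordinates[OF u, of y] by (metis image_eqI)
  qed
  have orth: "orthogonal_transformation (frame u)" by (rule orthogonal_transformation_frame[OF u])
  have box: "box \<in> lmeasurable" by (simp add: box_def)
  have hull_borel: "convex hull P \<in> sets borel"
    using fin by (intro borel_closed compact_imp_closed compact_convex_hull finite_imp_compact)
  have "measure lborel (convex hull P) = measure lebesgue (convex hull P)"
    using hull_borel by simp
  also have "\<dots> \<le> measure lebesgue (frame u ` box)"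
    using hull_R R_box hull_borel measurable_orthogonal_image[OF orth box]
    by (intro measure_mono_fmeasurable) auto
  also have "\<dots> = measure lebesgue box" by (rule measure_orthogonal_image[OF orth box])
  also have "\<dots> = measure lborel box" by (simp add: box_def)
  also have "\<dots> = (\<Prod>i\<in>UNIV. (vector [a, b] :: real^2)$i - (vector [-a, -b] :: real^2)$i)"
  proof -
    have "0 \<in> box" using a b by (simp add: box_def mem_box_cart forall_2)
    then have "box \<noteq> {}" by auto
    then show ?thesis unfolding box_def by (rule content_cbox_cart)
  qed
  also have "\<dots> = 4 * a * b" by (simp add: UNIV_2)
  finally show ?thesis .
qed

text \<open>Testing only a countable dense set of directions makes membership in a convex hull a
  countable intersection of measurable conditions.\<close>

lemma mem_convex_hull_iff_dense_directions:
  fixes P D :: "'a::euclidean_space set"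
  assumes fin: "finite P" and dense: "\<And>X. open X \<Longrightarrow> X \<noteq> {} \<Longrightarrow> \<exists>d\<in>D. d \<in> X"
  shows "y \<in> convex hull P \<longleftrightarrow> (\<forall>d\<in>D. \<exists>x\<in>P. d \<bullet> y \<le> d \<bullet> x)"
proof
  assume y: "y \<in> convex hull P"
  show "\<forall>d\<in>D. \<exists>x\<in>P. d \<bullet> y \<le> d \<bullet> x"
  proof (rule ccontr)
    assume "\<not> ?thesis"
    then obtain d where "P \<subseteq> {z. d \<bullet> z < d \<bullet> y}" by (auto simp: not_le)
    then have "convex hull P \<subseteq> {z. d \<bullet> z < d \<bullet> y}"
      by (intro hull_minimal) (auto simp: convex_halfspace_lt)
    then show False using y by auto
  qed
next
  assume r: "\<forall>d\<in>D. \<exists>x\<in>P. d \<bullet> y \<le> d \<bullet> x"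
  show "y \<in> convex hull P"
  proof (rule ccontr)
    assume "y \<notin> convex hull P"
    moreover have "closed (convex hull P)"
      using fin by (intro compact_imp_closed compact_convex_hull finite_imp_compact)
    ultimately obtain a c where ac: "a \<bullet> y < c" "\<And>x. x \<in> convex hull P \<Longrightarrow> c < a \<bullet> x"
      using separating_hyperplane_closed_point[OF convex_convex_hull] by blast
    define U where "U = (\<Inter>x\<in>P. {d. (x - y) \<bullet> d < 0})"
    have "open U" unfolding U_def using fin by (intro open_INT) (auto intro: open_halfspace_lt)
    moreover have "- a \<in> U"
      using ac hull_subset[of P convex]
      by (force simp: U_def inner_diff_left inner_diff_right inner_commute)
    ultimately obtain d where "d \<in> D" "d \<in> U" using dense by blast
    then obtain x where "x \<in> P" "d \<bullet> y \<le> d \<bullet> x" using r by blast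
    with \<open>d \<in> U\<close> show False by (auto simp: U_def inner_diff_right inner_commute)
  qed
qed

lemma hull_area_measurable:
  assumes meas: "\<And>k. Z k \<in> borel_measurable M"
  shows "hull_area Z n \<in> borel_measurable M"
proof -
  obtain D :: "(real^2) set" where D: "countable D" "\<And>X. open X \<Longrightarrow> X \<noteq> {} \<Longrightarrow> \<exists>d\<in>D. d \<in> X"
    using countable_dense_setE by blast
  have [measurable]: "(\<lambda>\<omega>. walk Z k \<omega>) \<in> borel_measurable M" for k
    unfolding walk_def using meas by measurable
  define Q where "Q = {p \<in> space (M \<Otimes>\<^sub>M lborel). \<forall>d\<in>D. \<exists>k\<in>{..n}. d \<bullet> snd p \<le> d \<bullet> walk Z k (fst p)}"
  have "Q \<in> sets (M \<Otimes>\<^sub>M lborel)"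
    unfolding Q_def using D(1) by measurable
  then have Q_meas: "(\<lambda>\<omega>. enn2real (emeasure lborel (Pair \<omega> -` Q))) \<in> borel_measurable M"
    using lborel.measurable_emeasure_Pair by measurable
  have slice: "Pair \<omega> -` Q = convex hull {walk Z k \<omega> | k. k \<le> n}" if "\<omega> \<in> space M" for \<omega>
  proof -
    have P: "{walk Z k \<omega> | k. k \<le> n} = (\<lambda>k. walk Z k \<omega>) ` {..n}" by auto
    show ?thesis
      using mem_convex_hull_iff_dense_directions[OF _ D(2)] that
      unfolding Q_def P by (auto simp: space_pair_measure)
  qed
  from Q_meas show ?thesis
    by (rule measurable_cong[THEN iffD1, rotated]) (simp add: hull_area_def measure_def slice)
qed

lemma inner_walk_eq:
  "walk Z k \<omega> \<bullet> v = (\<Sum>j<k. (Z j \<omega> - \<mu>) \<bullet> v) + real k * (\<mu> \<bullet> v)"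
  by (simp add: walk_def inner_sum_left inner_diff_left sum_subtractf)

lemma hull_area_le_partial_sum_max:
  fixes u \<mu> :: "real^2"
  assumes u: "norm u = 1" and \<mu>: "\<mu> \<bullet> rot90 u = 0"
  shows "hull_area Z n \<omega> \<le> 4 * (partial_sum_max (\<lambda>j. (Z j \<omega> - \<mu>) \<bullet> u) n + real n * norm \<mu>)
    * partial_sum_max (\<lambda>j. (Z j \<omega> - \<mu>) \<bullet> rot90 u) n"
proof -
  define P where "P = {walk Z k \<omega> | k. k \<le> n}"
  have "P = (\<lambda>k. walk Z k \<omega>) ` {..n}" by (auto simp: P_def)
  then have "finite P" by simp
  moreover have "\<bar>x \<bullet> u\<bar> \<le> partial_sum_max (\<lambda>j. (Z j \<omega> - \<mu>) \<bullet> u) n + real n * norm \<mu>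
      \<and> \<bar>x \<bullet> rot90 u\<bar> \<le> partial_sum_max (\<lambda>j. (Z j \<omega> - \<mu>) \<bullet> rot90 u) n" if "x \<in> P" for x
  proof -
    obtain k where k: "k \<le> n" "x = walk Z k \<omega>" using \<open>x \<in> P\<close> by (auto simp: P_def)
    have "\<bar>real k * (\<mu> \<bullet> u)\<bar> \<le> real n * norm \<mu>"
      using k(1) Cauchy_Schwarz_ineq2[of \<mu> u] u by (simp add: abs_mult mult_mono)
    then have "\<bar>x \<bullet> u\<bar> \<le> partial_sum_max (\<lambda>j. (Z j \<omega> - \<mu>) \<bullet> u) n + real n * norm \<mu>"
      using k(2) inner_walk_eq[of Z k \<omega> u \<mu>]
        abs_partial_sum_le_partial_sum_max[OF k(1), of "\<lambda>j. (Z j \<omega> - \<mu>) \<bullet> u"]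
        abs_triangle_ineq[of "\<Sum>j<k. (Z j \<omega> - \<mu>) \<bullet> u" "real k * (\<mu> \<bullet> u)"]
      by simp
    moreover have "\<bar>x \<bullet> rot90 u\<bar> \<le> partial_sum_max (\<lambda>j. (Z j \<omega> - \<mu>) \<bullet> rot90 u) n"
      using k inner_walk_eq[of Z k \<omega> "rot90 u" \<mu>] \<mu>
        abs_partial_sum_le_partial_sum_max[OF k(1), of "\<lambda>j. (Z j \<omega> - \<mu>) \<bullet> rot90 u"]
      by simp
    ultimately show ?thesis ..
  qed
  ultimately have "measure lborel (convex hull P) \<le> 4 * (partial_sum_max (\<lambda>j. (Z j \<omega> - \<mu>) \<bullet> u) n
      + real n * norm \<mu>) * partial_sum_max (\<lambda>j. (Z j \<omega> - \<mu>) \<bullet> rot90 u) n"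
    using u partial_sum_max_nonneg
    by (intro measure_convex_hull_le_rectangle) (auto intro!: add_nonneg_nonneg)
  then show ?thesis by (simp add: hull_area_def P_def)
qed

lemma split_product_bound_balanced:
  fixes N a I1 I2 C1 C2 p :: real
  assumes N: "N \<ge> 1" and a: "a \<ge> 0" and I: "I1 \<le> C1 * N powr p" "I2 \<le> C2 * N powr p"
  shows "8 powr p * (I1 + I2 + (N * a) powr p * (I2 / N powr (p/2) + N powr (p/2)))
    \<le> 8 powr p * max (C1 + C2) (C2 + 1) * (N powr p + a powr p * N powr (3*p/2))"
proof -
  have e1: "N powr p / N powr (p/2) = N powr (p/2)" using N by (simp flip: powr_diff)
  have e2: "N powr p * N powr (p/2) = N powr (3*p/2)" using N by (simp flip: powr_add)
  have "(N * a) powr p * (C2 * N powr p / N powr (p/2) + N powr (p/2))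
      = (C2 + 1) * (a powr p * (N powr p * N powr (p/2)))"
    using N a unfolding times_divide_eq_right[symmetric] e1 by (simp add: powr_mult algebra_simps)
  then have L: "(N * a) powr p * (C2 * N powr p / N powr (p/2) + N powr (p/2))
      = (C2 + 1) * (a powr p * N powr (3*p/2))"
    by (simp only: e2)
  have "I1 + I2 + (N * a) powr p * (I2 / N powr (p/2) + N powr (p/2))
      \<le> C1 * N powr p + C2 * N powr p + (N * a) powr p * (C2 * N powr p / N powr (p/2) + N powr (p/2))"
    using I by (intro add_mono mult_left_mono divide_right_mono) auto
  also have "\<dots> = (C1 + C2) * N powr p + (C2 + 1) * (a powr p * N powr (3*p/2))"
    unfolding L by (simp add: algebra_simps)
  also have "\<dots> \<le> max (C1 + C2) (C2 + 1) * (N powr p + a powr p * N powr (3*p/2))"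
    unfolding distrib_left by (intro add_mono mult_right_mono) auto
  finally show ?thesis by (simp add: mult.assoc mult_left_mono)
qed

context prob_space
begin

lemma integral_powr_le_split_product:
  fixes A \<alpha> \<beta> :: "'a \<Rightarrow> real" and L p s :: real
  assumes p: "p \<ge> 1" and A_meas: "A \<in> borel_measurable M"
    and A: "\<And>\<omega>. 0 \<le> A \<omega>" "\<And>\<omega>. A \<omega> \<le> 4 * (\<alpha> \<omega> + L) * \<beta> \<omega>"
    and nonneg: "\<And>\<omega>. \<alpha> \<omega> \<ge> 0" "\<And>\<omega>. \<beta> \<omega> \<ge> 0" "L \<ge> 0" and s: "s > 0"
    and int: "integrable M (\<lambda>\<omega>. \<alpha> \<omega> powr (2*p))" "integrable M (\<lambda>\<omega>. \<beta> \<omega> powr (2*p))"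
  shows "integrable M (\<lambda>\<omega>. A \<omega> powr p)"
    "(\<integral>\<omega>. A \<omega> powr p \<partial>M) \<le> 8 powr p * ((\<integral>\<omega>. \<alpha> \<omega> powr (2*p) \<partial>M) + (\<integral>\<omega>. \<beta> \<omega> powr (2*p) \<partial>M)
      + L powr p * ((\<integral>\<omega>. \<beta> \<omega> powr (2*p) \<partial>M) / s + s))"
proof -
  define B where "B \<omega> = 8 powr p * (\<alpha> \<omega> powr (2*p) + \<beta> \<omega> powr (2*p)
    + L powr p * (\<beta> \<omega> powr (2*p) / s + s))" for \<omega>
  have int_B: "integrable M B" unfolding B_def using int by auto
  have le_B: "A \<omega> powr p \<le> B \<omega>" for \<omega>
    unfolding B_def using powr_le_split_product[OF p A(1,2) nonneg(1,2,3) s] .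
  show int_A: "integrable M (\<lambda>\<omega>. A \<omega> powr p)"
    by (rule Bochner_Integration.integrable_bound[OF int_B])
      (use A_meas le_B in \<open>auto intro!: AE_I2 order_trans[OF _ abs_ge_self]\<close>)
  have "(\<integral>\<omega>. A \<omega> powr p \<partial>M) \<le> integral\<^sup>L M B"
    using int_A int_B le_B by (intro integral_mono) auto
  also have "\<dots> = 8 powr p * ((\<integral>\<omega>. \<alpha> \<omega> powr (2*p) \<partial>M) + (\<integral>\<omega>. \<beta> \<omega> powr (2*p) \<partial>M)
      + L powr p * ((\<integral>\<omega>. \<beta> \<omega> powr (2*p) \<partial>M) / s + s))"
    unfolding B_def using int by (simp add: prob_space)
  finally show "(\<integral>\<omega>. A \<omega> powr p \<partial>M) \<le> \<dots>" .
qed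

lemma hull_area_moment_bound:
  fixes Z :: "nat \<Rightarrow> 'a \<Rightarrow> real^2" and p :: real
  assumes meas: "\<And>k. Z k \<in> borel_measurable M"
    and ind: "indep_vars (\<lambda>_. borel) Z UNIV"
    and same: "\<And>k. distr M borel (Z k) = distr M borel (Z 0)"
    and p: "p \<ge> 1"
    and int0: "integrable M (\<lambda>\<omega>. norm (Z 0 \<omega>) powr (2 * p))"
  obtains C where "\<And>n. integrable M (\<lambda>\<omega>. hull_area Z n \<omega> powr p)"
    "\<And>n. n \<ge> 1 \<Longrightarrow> (\<integral>\<omega>. hull_area Z n \<omega> powr p \<partial>M)
      \<le> C * (real n powr p + norm (integral\<^sup>L M (Z 0)) powr p * real n powr (3*p/2))"
proof -
  define \<mu> where "\<mu> = integral\<^sup>L M (Z 0)"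
  define u where "u = (if \<mu> = 0 then axis 1 1 else (1/norm \<mu>) *\<^sub>R \<mu>)"
  have u: "norm u = 1" by (auto simp: u_def)
  have \<mu>_rot90: "\<mu> \<bullet> rot90 u = 0"
    by (cases "\<mu> = 0") (simp_all add: u_def rot90_scaleR)
  have q: "2 * p \<ge> 2" using p by simp
  define \<alpha> where "\<alpha> n \<omega> = partial_sum_max (\<lambda>j. (Z j \<omega> - \<mu>) \<bullet> u) n" for n \<omega>
  define \<beta> where "\<beta> n \<omega> = partial_sum_max (\<lambda>j. (Z j \<omega> - \<mu>) \<bullet> rot90 u) n" for n \<omega>
  obtain C1 where C1: "\<And>n. integrable M (\<lambda>\<omega>. \<alpha> n \<omega> powr (2*p))"
    "\<And>n. (\<integral>\<omega>. \<alpha> n \<omega> powr (2*p) \<partial>M) \<le> C1 * real n powr p"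
    using centered_projection_max_moment_bound[OF meas ind same q int0, of u]
    unfolding \<alpha>_def \<mu>_def by auto
  obtain C2 where C2: "\<And>n. integrable M (\<lambda>\<omega>. \<beta> n \<omega> powr (2*p))"
    "\<And>n. (\<integral>\<omega>. \<beta> n \<omega> powr (2*p) \<partial>M) \<le> C2 * real n powr p"
    using centered_projection_max_moment_bound[OF meas ind same q int0, of "rot90 u"]
    unfolding \<beta>_def \<mu>_def by auto
  have A_nonneg: "0 \<le> hull_area Z n \<omega>" for n \<omega> by (simp add: hull_area_def)
  have A_le: "hull_area Z n \<omega> \<le> 4 * (\<alpha> n \<omega> + real n * norm \<mu>) * \<beta> n \<omega>" for n \<omega>
    unfolding \<alpha>_def \<beta>_def by (rule hull_area_le_partial_sum_max[OF u \<mu>_rot90])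
  have split: "integrable M (\<lambda>\<omega>. hull_area Z n \<omega> powr p)"
    "(\<integral>\<omega>. hull_area Z n \<omega> powr p \<partial>M) \<le> 8 powr p * ((\<integral>\<omega>. \<alpha> n \<omega> powr (2*p) \<partial>M)
      + (\<integral>\<omega>. \<beta> n \<omega> powr (2*p) \<partial>M) + (real n * norm \<mu>) powr p * ((\<integral>\<omega>. \<beta> n \<omega> powr (2*p) \<partial>M) / s + s))"
    if "s > 0" for n s
    using integral_powr_le_split_product[where A="hull_area Z n" and \<alpha>="\<alpha> n" and \<beta>="\<beta> n"
        and L="real n * norm \<mu>", OF p hull_area_measurable[of Z, OF meas] A_nonneg A_le
        _ _ _ that C1(1) C2(1)]
    by (simp_all add: \<alpha>_def \<beta>_def partial_sum_max_nonneg)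
  have "(\<integral>\<omega>. hull_area Z n \<omega> powr p \<partial>M)
      \<le> 8 powr p * max (C1 + C2) (C2 + 1) * (real n powr p + norm \<mu> powr p * real n powr (3*p/2))"
    if n: "n \<ge> 1" for n
  proof -
    have "real n \<ge> 1" using n by simp
    then show ?thesis
      using order_trans[OF split(2) split_product_bound_balanced[OF _ _ C1(2) C2(2)]] by simp
  qed
  with split(1)[OF zero_less_one] show thesis using that unfolding \<mu>_def by blast
qed

end

lemma bigo_of_eventually_le:
  fixes f g h :: "'b \<Rightarrow> real"
  assumes "eventually (\<lambda>x. 0 \<le> f x \<and> f x \<le> g x) F" "g \<in> O[F](h)"
  shows "f \<in> O[F](h)"
proof -
  have "f \<in> O[F](g)"
    by (rule landau_o.big_mono) (use assms(1) in \<open>eventually_elim, auto\<close>)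
  then show ?thesis using assms(2) by (rule landau_o.big_trans)
qed

theorem lemma3p2:
  fixes M :: "'a measure" and Z :: "nat \<Rightarrow> 'a \<Rightarrow> real^2" and p :: real
  assumes "prob_space M"
    and "\<And>k. Z k \<in> borel_measurable M"
    and "prob_space.indep_vars M (\<lambda>_. borel) Z UNIV"
    and "\<And>k. distr M borel (Z k) = distr M borel (Z 0)"
    and "p \<ge> 1"
    and "integrable M (\<lambda>\<omega>. norm (Z 0 \<omega>) powr (2 * p))"
  shows "(\<forall>n. integrable M (\<lambda>\<omega>. hull_area Z n \<omega> powr p))
    \<and> (\<lambda>n. integral\<^sup>L M (\<lambda>\<omega>. hull_area Z n \<omega> powr p)) \<in> O(\<lambda>n. real n powr (3 * p / 2))
    \<and> (integral\<^sup>L M (Z 0) = 0 \<longrightarrow>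
         (\<lambda>n. integral\<^sup>L M (\<lambda>\<omega>. hull_area Z n \<omega> powr p)) \<in> O(\<lambda>n. real n powr p))"
proof -
  interpret prob_space M by (rule assms(1))
  define m where "m = norm (integral\<^sup>L M (Z 0)) powr p"
  define E where "E n = (\<integral>\<omega>. hull_area Z n \<omega> powr p \<partial>M)" for n
  obtain C where int: "\<And>n. integrable M (\<lambda>\<omega>. hull_area Z n \<omega> powr p)"
    and bound: "\<And>n. n \<ge> 1 \<Longrightarrow> E n \<le> C * (real n powr p + m * real n powr (3*p/2))"
    using hull_area_moment_bound[OF assms(2-6)] unfolding E_def m_def by blast
  have E0: "0 \<le> E n" for n unfolding E_def by (intro Bochner_Integration.integral_nonneg) simp
  have E_bound: "eventually (\<lambda>n. 0 \<le> E n \<and> E n \<le> C * (real n powr p + m * real n powr (3*p/2)))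
      sequentially"
    using eventually_ge_at_top[of "1::nat"] by (rule eventually_mono) (simp add: E0 bound)
  have powr_bigo: "(\<lambda>n. real n powr p) \<in> O(\<lambda>n. real n powr (3*p/2))"
    using assms(5) by (subst powr_bigo_iff[OF filterlim_real_sequentially]) auto
  have "E \<in> O(\<lambda>n. real n powr (3*p/2))"
    by (rule bigo_of_eventually_le[OF E_bound]) (simp add: sum_in_bigo(1)[OF powr_bigo])
  moreover have "E \<in> O(\<lambda>n. real n powr p)" if "integral\<^sup>L M (Z 0) = 0"
    using bigo_of_eventually_le[OF E_bound] that assms(5) by (simp add: m_def)
  ultimately show ?thesis using int by (simp add: E_def[abs_def])
qed

end
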